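(* Let $T:X\to Y$ be an injective linear operator between Archimedean vector lattices, and assume that $X$ has sufficiently many components. If $T$ is disjointness preserving, then the inverse $T^{-1}:TX\to X$ satisfies condition $(\beta)$, i.e. for $y,y_0\in TX$ with $y\in\{y_0\}^{dd}$ (band taken in $Y$) we have $T^{-1}y\in\{T^{-1}y_0\}^{dd}$ (band taken in $X$).
   Context: All vector lattices are Archimedean. For a subset $A$ of a vector lattice $X$, $A^d=\{x\in X: |x|\wedge|a|=0 \text{ for all } a\in A\}$ and $A^{dd}=(A^d)^d$. For $a,b\in X$ we write $a\lhd b$ if $\{a\}^{dd}\subseteq\{b\}^{dd}$. A linear operator $S$ satisfies condition $(\beta)$ if $Sa\lhd Sb$ whenever $a\lhd b$. A linear operator is disjointness preserving if it maps disjoint elements to disjoint elements. An element $x'$ is a component of $x$ if $|x'|\wedge|x-x'|=0$. A vector lattice $X$ has sufficiently many components if whenever $x,u\in X$ with $x\notin\{u\}^{dd}$, there exists a nonzero component $x'$ of $x$ with $|x'|\wedge|u|=0$. *)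

theory Defs
  imports Complex_Main
begin

class vector_lattice = ordered_real_vector + lattice

class archimedean_vector_lattice = vector_lattice +
  assumes archimedean: "0 \<le> x \<Longrightarrow> (\<forall>n::nat. of_nat n *\<^sub>R x \<le> y) \<Longrightarrow> x = 0"

definition vabs :: "'a::vector_lattice \<Rightarrow> 'a" where
  "vabs x = sup x (- x)"

definition disj :: "'a::vector_lattice \<Rightarrow> 'a \<Rightarrow> bool" where
  "disj x y \<longleftrightarrow> inf (vabs x) (vabs y) = 0"

definition dcompl :: "'a::vector_lattice set \<Rightarrow> 'a set" where
  "dcompl A = {x. \<forall>a\<in>A. disj x a}"

definition band :: "'a::vector_lattice \<Rightarrow> 'a set" where
  "band x = dcompl (dcompl {x})"

definition component :: "'a::vector_lattice \<Rightarrow> 'a \<Rightarrow> bool" where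
  "component x' x \<longleftrightarrow> disj x' (x - x')"

definition suff_many_components :: "'a::vector_lattice itself \<Rightarrow> bool" where
  "suff_many_components _ \<longleftrightarrow>
     (\<forall>x u::'a. x \<notin> band u \<longrightarrow> (\<exists>x'. component x' x \<and> x' \<noteq> 0 \<and> disj x' u))"

definition disjointness_preserving :: "('a::vector_lattice \<Rightarrow> 'b::vector_lattice) \<Rightarrow> bool" where
  "disjointness_preserving T \<longleftrightarrow> (\<forall>a b. disj a b \<longrightarrow> disj (T a) (T b))"

end

theory Submission
  imports Defs
begin

text \<open>Suppose \<open>T x \<in> {T x\<^sub>0}\<^sup>d\<^sup>d\<close> but \<open>x \<notin> {x\<^sub>0}\<^sup>d\<^sup>d\<close>. Sufficiently many components give a nonzero
  component \<open>x'\<close> of \<open>x\<close> disjoint from \<open>x\<^sub>0\<close>. Since \<open>T\<close> is linear and disjointness preserving, \<open>T x'\<close>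
  is a component of \<open>T x\<close> lying in \<open>{T x\<^sub>0}\<^sup>d\<close>, hence disjoint from \<open>T x\<close> itself. A component
  disjoint from the whole element is zero, so \<open>T x' = 0\<close>, contradicting injectivity.\<close>

lemma vabs_ge: "x \<le> vabs x" "- x \<le> vabs x"
  for x :: "'a::vector_lattice"
  by (simp_all add: vabs_def)

lemma vabs_nonneg: "0 \<le> vabs x"
  for x :: "'a::vector_lattice"
proof -
  have "0 \<le> vabs x + vabs x"
    using add_mono[OF vabs_ge(1)[of x] vabs_ge(2)[of x]] by simp
  then have "0 \<le> (1/2::real) *\<^sub>R (vabs x + vabs x)"
    by (rule scaleR_nonneg_nonneg[rotated]) simp
  also have "(1/2::real) *\<^sub>R (vabs x + vabs x) = vabs x"
    by (simp add: scaleR_2[symmetric])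
  finally show ?thesis .
qed

lemma vabs_eq_0_iff [simp]: "vabs x = 0 \<longleftrightarrow> x = 0"
  for x :: "'a::vector_lattice"
proof
  assume "vabs x = 0"
  then show "x = 0"
    using vabs_ge[of x] by (metis antisym neg_le_0_iff_le)
qed (simp add: vabs_def)

lemma vabs_diff_le: "vabs (u - v) \<le> vabs u + vabs v"
  for u v :: "'a::vector_lattice"
proof -
  have "u - v \<le> vabs u + vabs v"
    using add_mono[OF vabs_ge(1)[of u] vabs_ge(2)[of v]] by simp
  moreover have "- (u - v) \<le> vabs u + vabs v"
    using add_mono[OF vabs_ge(2)[of u] vabs_ge(1)[of v]] by simp
  ultimately show ?thesis
    by (simp add: vabs_def)
qed

lemma inf_add_le_add_inf:
  fixes a b c :: "'a::vector_lattice"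
  assumes "0 \<le> a" "0 \<le> b" "0 \<le> c"
  shows "inf a (b + c) \<le> inf a b + inf a c"
proof -
  define d where "d = inf a (b + c)"
  have "d - b \<le> a"
    using assms(2) by (metis d_def inf_le1 add_increasing2 diff_add_cancel le_diff_eq)
  moreover have "d - b \<le> c"
    by (simp add: d_def diff_le_eq add.commute)
  ultimately have "d - b \<le> inf a c"
    by simp
  then have "d - inf a c \<le> b"
    by (metis diff_le_eq le_diff_eq add.commute)
  moreover have "d - inf a c \<le> a"
    using assms(1,3) by (simp add: d_def diff_le_eq add_increasing2 le_infI1)
  ultimately have "d - inf a c \<le> inf a b"
    by simp
  then show ?thesis
    by (simp only: d_def diff_le_eq)
qed

lemma disj_commute: "disj a b \<longleftrightarrow> disj b a"
  by (simp add: disj_def inf_commute)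

lemma component_disj_eq_0:
  fixes z u :: "'a::vector_lattice"
  assumes "component z u" "disj z u"
  shows "z = 0"
proof -
  have "vabs z \<le> inf (vabs z) (vabs u + vabs (u - z))"
    using vabs_diff_le[of u "u - z"] by simp
  also have "\<dots> \<le> inf (vabs z) (vabs u) + inf (vabs z) (vabs (u - z))"
    by (rule inf_add_le_add_inf) (simp_all add: vabs_nonneg)
  also have "\<dots> = 0"
    using assms by (simp add: disj_def component_def)
  finally have "vabs z = 0"
    using vabs_nonneg[of z] by (rule antisym)
  then show ?thesis
    by simp
qed

lemma disj_if_mem_band:
  assumes "y \<in> band y0" "disj z y0"
  shows "disj y z"
  using assms by (simp add: band_def dcompl_def)

lemma component_image:
  assumes "linear T" "disjointness_preserving T" "component x' x"
  shows "component (T x') (T x)"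
proof -
  have "disj (T x') (T (x - x'))"
    using assms(2,3) by (simp add: disjointness_preserving_def component_def)
  then show ?thesis
    using assms(1) by (simp add: component_def linear_diff)
qed

lemma mem_band_if_image_mem_band:
  fixes T :: "'a::vector_lattice \<Rightarrow> 'b::vector_lattice"
  assumes "linear T" "inj T" "suff_many_components TYPE('a)" "disjointness_preserving T"
    and "T x \<in> band (T x0)"
  shows "x \<in> band x0"
proof (rule ccontr)
  assume "x \<notin> band x0"
  then obtain x' where x': "component x' x" "x' \<noteq> 0" "disj x' x0"
    using assms(3) unfolding suff_many_components_def by blast
  have "component (T x') (T x)"
    using assms(1,4) x'(1) by (rule component_image)
  moreover have "disj (T x') (T x)"
    using assms(4,5) x'(3)
    by (simp add: disjointness_preserving_def disj_commute disj_if_mem_band)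
  ultimately have "T x' = T 0"
    using assms(1) component_disj_eq_0 linear_0 by metis
  with assms(2) x'(2) show False
    by (simp add: inj_eq)
qed

theorem theorem3p2:
  fixes T :: "'a::archimedean_vector_lattice \<Rightarrow> 'b::archimedean_vector_lattice"
  assumes "linear T"
    and "inj T"
    and "suff_many_components TYPE('a)"
    and "disjointness_preserving T"
  shows "\<forall>y\<in>range T. \<forall>y0\<in>range T. y \<in> band y0 \<longrightarrow> inv T y \<in> band (inv T y0)"
proof (intro ballI impI)
  fix y y0
  assume "y \<in> range T" "y0 \<in> range T" and "y \<in> band y0"
  then obtain x x0 where "y = T x" "y0 = T x0" "T x \<in> band (T x0)"
    by blast
  with assms show "inv T y \<in> band (inv T y0)"
    by (simp add: mem_band_if_image_mem_band)
qed

end
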